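(* Let $X = [X_1 \; X_2] \in \mathbb{R}^{N\times P}$ with $X_1 \in \mathbb{R}^{N\times P_1}$, $X_2\in\mathbb{R}^{N\times P_2}$, $P = P_1+P_2$, and suppose the $N$-vector of ones $\mathbf{1}$ lies in the column span of $X_1$. Consider the hierarchical normal linear regression $$\mathbf{Y}\mid \boldsymbol\beta,\Phi \sim N(X_1\boldsymbol\beta_1 + X_2\boldsymbol\beta_2,\Phi),\quad \boldsymbol\beta_1\sim N(0,C),\quad \boldsymbol\beta_2\mid\Sigma\sim N(0,\Sigma),\quad \Sigma\sim f(\Sigma),\ \Phi\sim f(\Phi),$$ where $\Sigma\in\mathbb{R}^{P_2\times P_2}$ is positive definite and $\Phi\in\mathbb{R}^{N\times N}$ is diagonal and positive definite; in the Bayesian setting the prior densities $f(\Sigma)$, $f(\Phi)$ are such that the posterior is proper. Let $W$ be the $N\times N$ matrix of borrowing factors $$W = XVX'\Phi^{-1},\qquad V = \left(X'\Phi^{-1}X + \begin{bmatrix} C^{-1} & 0\\ 0 & \Sigma^{-1}\end{bmatrix}\right)^{-1},$$ where $C^{-1}$ is taken to be the $P_1\times P_1$ zero matrix. Then $\sum_{j=1}^N w_{ij} = 1$ for all $i=1,\dots,N$, i.e. $W\mathbf{1}=\mathbf{1}$.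
   Context: $w_{ij}$ denotes the $(i,j)$ entry of $W$ (the "borrowing factor" placed on $Y_j$ in the point estimate $\hat Y_i = (W\mathbf{Y})_i$). $W$ is defined for given values of $\Sigma$ and $\Phi$, and $V$ is assumed to exist (the displayed matrix is invertible). Setting $C^{-1}=0$ corresponds to giving the fixed effects $\boldsymbol\beta_1$ infinite prior variance. *)

theory Defs
  imports "HOL-Analysis.Analysis"
begin

definition hconcat :: "real^'p1^'n \<Rightarrow> real^'p2^'n \<Rightarrow> real^('p1 + 'p2)^'n" where
  "hconcat A B = (\<chi> i j. case j of Inl k \<Rightarrow> A $ i $ k | Inr k \<Rightarrow> B $ i $ k)"

definition blockdiag :: "real^'p1^'p1 \<Rightarrow> real^'p2^'p2 \<Rightarrow> real^('p1 + 'p2)^('p1 + 'p2)" where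
  "blockdiag A B = (\<chi> i j. case (i, j) of
      (Inl a, Inl b) \<Rightarrow> A $ a $ b
    | (Inr a, Inr b) \<Rightarrow> B $ a $ b
    | _ \<Rightarrow> 0)"

definition pos_def_mat :: "real^'n^'n \<Rightarrow> bool" where
  "pos_def_mat S \<longleftrightarrow> transpose S = S \<and> (\<forall>x. x \<noteq> 0 \<longrightarrow> x \<bullet> (S *v x) > 0)"

definition ones_vec :: "real^'n" where
  "ones_vec = (\<chi> i. 1)"

definition V_mat :: "real^'p1^'n \<Rightarrow> real^'p2^'n \<Rightarrow> real^'p2^'p2 \<Rightarrow> real^'n^'n
    \<Rightarrow> real^('p1 + 'p2)^('p1 + 'p2)" where
  "V_mat X1 X2 \<Sigma> \<Phi> = matrix_inv
     (transpose (hconcat X1 X2) ** matrix_inv \<Phi> ** hconcat X1 X2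
       + blockdiag (0 :: real^'p1^'p1) (matrix_inv \<Sigma>))"

definition W_mat :: "real^'p1^'n \<Rightarrow> real^'p2^'n \<Rightarrow> real^'p2^'p2 \<Rightarrow> real^'n^'n \<Rightarrow> real^'n^'n" where
  "W_mat X1 X2 \<Sigma> \<Phi> = hconcat X1 X2 ** V_mat X1 X2 \<Sigma> \<Phi> ** transpose (hconcat X1 X2) ** matrix_inv \<Phi>"

end

theory Submission
  imports Defs
begin

text \<open>Write \<open>A = X' \<Phi>\<^sup>-\<^sup>1 X + diag(0, \<Sigma>\<^sup>-\<^sup>1)\<close> for the posterior precision, so that
  \<open>W = X A\<^sup>-\<^sup>1 X' \<Phi>\<^sup>-\<^sup>1\<close>. Since \<open>1 = X\<^sub>1 a\<close> for some \<open>a\<close>, the vector \<open>e = (a, 0)\<close> satisfies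
  \<open>X e = 1\<close>, and the prior precision annihilates \<open>e\<close> because its \<open>\<beta>\<^sub>1\<close>-block is zero
  (the flat prior on \<open>\<beta>\<^sub>1\<close>). Hence \<open>A e = X' \<Phi>\<^sup>-\<^sup>1 1\<close>, so \<open>A\<^sup>-\<^sup>1 X' \<Phi>\<^sup>-\<^sup>1 1 = e\<close> and
  \<open>W 1 = X e = 1\<close>.\<close>

lemma matrix_inv_left:
  fixes A :: "'a::semiring_1^'n^'m"
  assumes "invertible A"
  shows "matrix_inv A ** A = mat 1"
proof -
  have "\<exists>A'. A ** A' = mat 1 \<and> A' ** A = mat 1"
    using assms unfolding invertible_def by blast
  from someI_ex[OF this] show ?thesis
    unfolding matrix_inv_def by blast
qed

lemma matrix_inv_mult_vec_eq:
  fixes A :: "'a::comm_semiring_1^'n^'n"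
  assumes "invertible A" and "A *v x = y"
  shows "matrix_inv A *v y = x"
  using assms(1) by (simp add: matrix_vector_mul_assoc matrix_inv_left flip: assms(2))

lemma sum_UNIV_Plus:
  fixes f :: "'a::finite + 'b::finite \<Rightarrow> 'c::comm_monoid_add"
  shows "sum f UNIV = (\<Sum>k\<in>UNIV. f (Inl k)) + (\<Sum>k\<in>UNIV. f (Inr k))"
  using sum.Plus[of "UNIV :: 'a set" "UNIV :: 'b set" f] by (simp add: comp_def)

lemma span_columns_eq_range:
  fixes A :: "real^'n^'m"
  shows "span (columns A) = range ((*v) A)"
proof
  show "span (columns A) \<subseteq> range ((*v) A)"
    by (rule span_minimal)
      (auto simp: columns_image_basis intro: linear_subspace_image)
  show "range ((*v) A) \<subseteq> span (columns A)"
    using matrix_vector_mult_in_columnspace by blast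
qed

definition pad_Inl :: "'a::zero^'p1 \<Rightarrow> 'a^('p1 + 'p2::finite)" where
  "pad_Inl a = (\<chi> j. case j of Inl k \<Rightarrow> a $ k | Inr _ \<Rightarrow> 0)"

lemma hconcat_mult_pad_Inl: "hconcat A B *v pad_Inl a = A *v a"
  by (simp add: hconcat_def pad_Inl_def matrix_vector_mult_def vec_eq_iff sum_UNIV_Plus)

lemma blockdiag_zero_mult_pad_Inl: "blockdiag 0 S *v pad_Inl a = 0"
proof -
  have "(blockdiag 0 S *v pad_Inl a) $ i = 0" for i
    by (cases i) (simp_all add: blockdiag_def pad_Inl_def matrix_vector_mult_def sum_UNIV_Plus)
  then show ?thesis
    by (simp add: vec_eq_iff)
qed

lemma penalized_smoother_fixes_unpenalized_fit:
  fixes X :: "'a::comm_semiring_1^'p^'n"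
  assumes "invertible (transpose X ** P ** X + B)" and "B *v e = 0"
  shows "X ** matrix_inv (transpose X ** P ** X + B) ** transpose X ** P *v (X *v e) = X *v e"
proof -
  have "(transpose X ** P ** X + B) *v e = transpose X ** P *v (X *v e)"
    using assms(2) by (simp add: matrix_vector_mult_add_rdistrib matrix_vector_mul_assoc)
  then have "matrix_inv (transpose X ** P ** X + B) *v (transpose X ** P *v (X *v e)) = e"
    by (rule matrix_inv_mult_vec_eq[OF assms(1)])
  then show ?thesis
    by (simp add: matrix_mul_assoc flip: matrix_vector_mul_assoc)
qed

theorem theorem1:
  fixes X1 :: "real^'p1^'n" and X2 :: "real^'p2^'n"
    and \<Sigma> :: "real^'p2^'p2" and \<Phi> :: "real^'n^'n"
  assumes ones_span: "ones_vec \<in> span (columns X1)"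
    and Sigma_pd: "pos_def_mat \<Sigma>"
    and Phi_diag: "\<forall>i j. i \<noteq> j \<longrightarrow> \<Phi> $ i $ j = 0"
    and Phi_pd: "pos_def_mat \<Phi>"
    and V_exists: "invertible (transpose (hconcat X1 X2) ** matrix_inv \<Phi> ** hconcat X1 X2
                     + blockdiag (0 :: real^'p1^'p1) (matrix_inv \<Sigma>))"
  shows "W_mat X1 X2 \<Sigma> \<Phi> *v ones_vec = ones_vec"
proof -
  obtain a where a: "X1 *v a = ones_vec"
    using ones_span unfolding span_columns_eq_range by (metis rangeE)
  have fit: "hconcat X1 X2 *v pad_Inl a = ones_vec"
    by (simp add: hconcat_mult_pad_Inl a)
  show ?thesis
    using penalized_smoother_fixes_unpenalized_fit[OF V_exists blockdiag_zero_mult_pad_Inl[of _ a]]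
    unfolding W_mat_def V_mat_def fit .
qed

end
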